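(* Let $I,I',I'':B_0(\Sigma)\to\mathbb{R}$ be monotonic and constant-linear with $I'\le I''$ (pointwise on $B_0(\Sigma)$). Then the following are equivalent: (i) for all $\phi,\varphi\in B_0(\Sigma)$, if $I'(\phi)>I'(\varphi)$ and $I''(\phi)>I''(\varphi)$, then $I(\phi)>I(\varphi)$; (ii) there exists $\alpha\in[0,1]$ such that $I(\varphi)=\alpha I'(\varphi)+(1-\alpha)I''(\varphi)$ for all $\varphi\in B_0(\Sigma)$.
   Context: $(S,\Sigma)$ is a set with an algebra of subsets; $B_0(\Sigma)$ is the set of real-valued $\Sigma$-measurable simple functions on $S$. A functional $I:B_0(\Sigma)\to\mathbb{R}$ is constant-linear if $I(a\varphi+b)=aI(\varphi)+b$ for all $\varphi\in B_0(\Sigma)$, $a\ge 0$, $b\in\mathbb{R}$ (where $b$ denotes the constant function), and monotonic if $\varphi\ge\psi$ pointwise implies $I(\varphi)\ge I(\psi)$. *)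

theory Defs
  imports "HOL-Analysis.Analysis"
begin

text \<open>Real-valued Sigma-measurable simple functions on S, for an algebra Sigma of subsets of S.
  Functions are represented extensionally: they vanish outside S.\<close>
definition B0 :: "'a set \<Rightarrow> 'a set set \<Rightarrow> ('a \<Rightarrow> real) set" where
  "B0 S \<Sigma> = {f. finite (f ` S) \<and> (\<forall>c. {x\<in>S. f x = c} \<in> \<Sigma>) \<and> (\<forall>x. x \<notin> S \<longrightarrow> f x = 0)}"

definition constant_linear :: "'a set \<Rightarrow> 'a set set \<Rightarrow> (('a \<Rightarrow> real) \<Rightarrow> real) \<Rightarrow> bool" where
  "constant_linear S \<Sigma> I \<longleftrightarrow>
     (\<forall>\<phi>\<in>B0 S \<Sigma>. \<forall>a b. a \<ge> 0 \<longrightarrow>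
        I (\<lambda>x\<in>S. a * \<phi> x + b) = a * I \<phi> + b)"

definition monotonic :: "'a set \<Rightarrow> 'a set set \<Rightarrow> (('a \<Rightarrow> real) \<Rightarrow> real) \<Rightarrow> bool" where
  "monotonic S \<Sigma> I \<longleftrightarrow>
     (\<forall>\<phi>\<in>B0 S \<Sigma>. \<forall>\<psi>\<in>B0 S \<Sigma>. (\<forall>x\<in>S. \<phi> x \<ge> \<psi> x) \<longrightarrow> I \<phi> \<ge> I \<psi>)"

end

theory Submission
  imports Defs
begin

text \<open>Comparing \<phi> with constants shows \<open>I' \<le> I \<le> I''\<close>. Lowering a function by a small
  constant shows that \<open>I \<phi>\<close> depends only on the pair \<open>(I' \<phi>, I'' \<phi>)\<close>: if two functions
  agree there but differ under \<open>I\<close>, the \<open>I\<close>-larger one, lowered by half the gap, is beaten by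
  the other under both \<open>I'\<close> and \<open>I''\<close> while still winning under \<open>I\<close>. A positive affine
  normalisation to \<open>I' = 0\<close>, \<open>I'' = 1\<close> then shows that \<open>(I - I') / (I'' - I')\<close> is a constant
  \<open>\<beta> \<in> [0, 1]\<close> wherever \<open>I' < I''\<close>, and \<open>\<alpha> = 1 - \<beta>\<close>.\<close>

definition weak_pareto :: "('a \<Rightarrow> real) set \<Rightarrow> (('a \<Rightarrow> real) \<Rightarrow> real) \<Rightarrow>
    (('a \<Rightarrow> real) \<Rightarrow> real) \<Rightarrow> (('a \<Rightarrow> real) \<Rightarrow> real) \<Rightarrow> bool"
  where "weak_pareto B I I' I'' \<longleftrightarrow>
    (\<forall>\<phi>\<in>B. \<forall>\<psi>\<in>B. I' \<phi> > I' \<psi> \<and> I'' \<phi> > I'' \<psi> \<longrightarrow> I \<phi> > I \<psi>)"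

definition affine_transform :: "'a set \<Rightarrow> real \<Rightarrow> real \<Rightarrow> ('a \<Rightarrow> real) \<Rightarrow> 'a \<Rightarrow> real" where
  "affine_transform S a b \<phi> x = (if x \<in> S then a * \<phi> x + b else 0)"

lemma zero_in_B0:
  assumes "algebra S \<Sigma>"
  shows "(\<lambda>x. 0) \<in> B0 S \<Sigma>"
proof -
  interpret algebra S \<Sigma> by (rule assms)
  have "{x\<in>S. (0::real) = c} \<in> \<Sigma>" for c
    by (cases "c = 0") (auto simp: top)
  then show ?thesis
    by (auto simp: B0_def image_constant_conv)
qed

lemma affine_transform_in_B0:
  assumes alg: "algebra S \<Sigma>" and \<phi>: "\<phi> \<in> B0 S \<Sigma>"
  shows "affine_transform S a b \<phi> \<in> B0 S \<Sigma>"
proof -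
  interpret algebra S \<Sigma> by (rule alg)
  have "affine_transform S a b \<phi> ` S \<subseteq> (\<lambda>y. a * y + b) ` \<phi> ` S"
    by (auto simp: affine_transform_def)
  moreover have "finite (\<phi> ` S)"
    using \<phi> by (simp add: B0_def)
  ultimately have "finite (affine_transform S a b \<phi> ` S)"
    using finite_subset by blast
  moreover have "{x\<in>S. affine_transform S a b \<phi> x = c} \<in> \<Sigma>" for c
  proof (cases "a = 0")
    case True
    then show ?thesis
      by (cases "b = c") (auto simp: affine_transform_def top)
  next
    case False
    then have "{x\<in>S. affine_transform S a b \<phi> x = c} = {x\<in>S. \<phi> x = (c - b) / a}"
      by (auto simp: affine_transform_def field_simps)
    then show ?thesis
      using \<phi> by (simp add: B0_def)
  qed
  ultimately show ?thesis
    by (simp add: B0_def affine_transform_def)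
qed

text \<open>\<^const>\<open>constant_linear\<close> evaluates \<open>I\<close> on the restriction \<open>\<lambda>x\<in>S. _\<close>, which is
  \<^const>\<open>undefined\<close> off \<open>S\<close> and hence not in \<^const>\<open>B0\<close>; instantiating it with \<open>a = 1\<close>,
  \<open>b = 0\<close> transfers the value to the representative vanishing off \<open>S\<close>.\<close>
lemma constant_linear_affine_transform:
  assumes alg: "algebra S \<Sigma>" and cl: "constant_linear S \<Sigma> I"
    and \<phi>: "\<phi> \<in> B0 S \<Sigma>" and "a \<ge> 0"
  shows "I (affine_transform S a b \<phi>) = a * I \<phi> + b"
proof -
  have "I (\<lambda>x\<in>S. 1 * affine_transform S a b \<phi> x + 0) = 1 * I (affine_transform S a b \<phi>) + 0"
    using cl affine_transform_in_B0[OF alg \<phi>] unfolding constant_linear_def by (meson zero_le_one)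
  then have "I (affine_transform S a b \<phi>) = I (\<lambda>x\<in>S. 1 * affine_transform S a b \<phi> x + 0)"
    by simp
  also have "\<dots> = I (\<lambda>x\<in>S. a * \<phi> x + b)"
    by (simp add: affine_transform_def cong: restrict_cong)
  also have "\<dots> = a * I \<phi> + b"
    using cl \<phi> \<open>a \<ge> 0\<close> unfolding constant_linear_def by blast
  finally show ?thesis .
qed

lemma constant_linear_constant:
  assumes "algebra S \<Sigma>" "constant_linear S \<Sigma> I"
  shows "I (affine_transform S 0 c (\<lambda>x. 0)) = c"
  using constant_linear_affine_transform[OF assms zero_in_B0[OF assms(1)]] by simp

definition standardize :: "'a set \<Rightarrow> (('a \<Rightarrow> real) \<Rightarrow> real) \<Rightarrow> (('a \<Rightarrow> real) \<Rightarrow> real) \<Rightarrow>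
    ('a \<Rightarrow> real) \<Rightarrow> 'a \<Rightarrow> real" where
  "standardize S I' I'' \<phi> =
     affine_transform S (1 / (I'' \<phi> - I' \<phi>)) (- I' \<phi> / (I'' \<phi> - I' \<phi>)) \<phi>"

lemma constant_linear_standardize:
  assumes "algebra S \<Sigma>" "constant_linear S \<Sigma> J" "\<phi> \<in> B0 S \<Sigma>" "I' \<phi> < I'' \<phi>"
  shows "J (standardize S I' I'' \<phi>) = (J \<phi> - I' \<phi>) / (I'' \<phi> - I' \<phi>)"
  using constant_linear_affine_transform[OF assms(1-3)] assms(4)
  by (simp add: standardize_def diff_divide_distrib)

lemma mixture_imp_weak_pareto:
  assumes "\<alpha> \<in> {0..1}" and mixture: "\<forall>\<phi>\<in>B. I \<phi> = \<alpha> * I' \<phi> + (1 - \<alpha>) * I'' \<phi>"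
  shows "weak_pareto B I I' I''"
  unfolding weak_pareto_def
proof (intro ballI impI)
  fix \<phi> \<psi> assume "\<phi> \<in> B" "\<psi> \<in> B" and less: "I' \<phi> > I' \<psi> \<and> I'' \<phi> > I'' \<psi>"
  have "\<alpha> * I' \<psi> + (1 - \<alpha>) * I'' \<psi> < \<alpha> * I' \<phi> + (1 - \<alpha>) * I'' \<phi>"
  proof (cases "\<alpha> = 0")
    case False
    with \<open>\<alpha> \<in> {0..1}\<close> less show ?thesis
      by (intro add_less_le_mono mult_strict_left_mono mult_left_mono) auto
  qed (use less in simp)
  then show "I \<phi> > I \<psi>"
    using mixture \<open>\<phi> \<in> B\<close> \<open>\<psi> \<in> B\<close> by simp
qed

context
  fixes S :: "'a set" and \<Sigma> :: "'a set set" and I I' I'' :: "('a \<Rightarrow> real) \<Rightarrow> real"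
  assumes alg: "algebra S \<Sigma>"
    and cl: "constant_linear S \<Sigma> I" and cl': "constant_linear S \<Sigma> I'"
    and cl'': "constant_linear S \<Sigma> I''"
    and pareto: "weak_pareto (B0 S \<Sigma>) I I' I''"
begin

lemma weak_pareto_between:
  assumes \<phi>: "\<phi> \<in> B0 S \<Sigma>" and "I' \<phi> \<le> I'' \<phi>"
  shows "I' \<phi> \<le> I \<phi>" "I \<phi> \<le> I'' \<phi>"
proof -
  let ?const = "\<lambda>c. affine_transform S 0 c (\<lambda>x. 0)"
  have const: "?const c \<in> B0 S \<Sigma>" "I (?const c) = c" "I' (?const c) = c" "I'' (?const c) = c" for c
    using affine_transform_in_B0[OF alg zero_in_B0[OF alg]] constant_linear_constant[OF alg]
      cl cl' cl'' by auto
  show "I' \<phi> \<le> I \<phi>"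
  proof (rule ccontr)
    assume "\<not> I' \<phi> \<le> I \<phi>"
    define c where "c = (I \<phi> + I' \<phi>) / 2"
    have "I' (?const c) < I' \<phi> \<and> I'' (?const c) < I'' \<phi> \<longrightarrow> I (?const c) < I \<phi>"
      using pareto \<phi> const(1) unfolding weak_pareto_def by blast
    with \<open>\<not> I' \<phi> \<le> I \<phi>\<close> show False
      using const(2-4)[of c] \<open>I' \<phi> \<le> I'' \<phi>\<close> by (simp add: c_def)
  qed
  show "I \<phi> \<le> I'' \<phi>"
  proof (rule ccontr)
    assume "\<not> I \<phi> \<le> I'' \<phi>"
    define c where "c = (I \<phi> + I'' \<phi>) / 2"
    have "I' \<phi> < I' (?const c) \<and> I'' \<phi> < I'' (?const c) \<longrightarrow> I \<phi> < I (?const c)"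
      using pareto \<phi> const(1) unfolding weak_pareto_def by blast
    with \<open>\<not> I \<phi> \<le> I'' \<phi>\<close> show False
      using const(2-4)[of c] \<open>I' \<phi> \<le> I'' \<phi>\<close> by (simp add: c_def)
  qed
qed

lemma weak_pareto_determined:
  assumes "\<phi> \<in> B0 S \<Sigma>" "\<psi> \<in> B0 S \<Sigma>" "I' \<phi> = I' \<psi>" "I'' \<phi> = I'' \<psi>"
  shows "I \<phi> = I \<psi>"
proof -
  have "I \<phi> \<le> I \<psi>"
    if \<phi>: "\<phi> \<in> B0 S \<Sigma>" and \<psi>: "\<psi> \<in> B0 S \<Sigma>" and "I' \<phi> = I' \<psi>" "I'' \<phi> = I'' \<psi>" for \<phi> \<psi>
  proof (rule ccontr)
    assume "\<not> I \<phi> \<le> I \<psi>"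
    define e where "e = (I \<phi> - I \<psi>) / 2"
    let ?lowered = "affine_transform S 1 (- e) \<phi>"
    have "e > 0"
      using \<open>\<not> I \<phi> \<le> I \<psi>\<close> by (simp add: e_def)
    have shifted: "J ?lowered = J \<phi> - e" if "constant_linear S \<Sigma> J" for J
      using constant_linear_affine_transform[OF alg that \<phi>] by simp
    have "I ?lowered < I \<psi>"
      using pareto affine_transform_in_B0[OF alg \<phi>] \<psi> shifted[OF cl'] shifted[OF cl'']
        \<open>e > 0\<close> \<open>I' \<phi> = I' \<psi>\<close> \<open>I'' \<phi> = I'' \<psi>\<close>
      unfolding weak_pareto_def by simp
    then show False
      using shifted[OF cl] \<open>\<not> I \<phi> \<le> I \<psi>\<close> by (simp add: e_def field_simps)
  qed
  with assms show ?thesis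
    by (metis order_antisym)
qed

lemma weak_pareto_imp_interpolation:
  assumes dominated: "\<forall>\<phi>\<in>B0 S \<Sigma>. I' \<phi> \<le> I'' \<phi>"
  obtains \<beta> where "\<beta> \<in> {0..1}" "\<forall>\<phi>\<in>B0 S \<Sigma>. I \<phi> = I' \<phi> + \<beta> * (I'' \<phi> - I' \<phi>)"
proof -
  let ?std = "standardize S I' I''"
  have std: "?std \<phi> \<in> B0 S \<Sigma>" "I' (?std \<phi>) = 0" "I'' (?std \<phi>) = 1"
    "I (?std \<phi>) = (I \<phi> - I' \<phi>) / (I'' \<phi> - I' \<phi>)"
    if "\<phi> \<in> B0 S \<Sigma>" "I' \<phi> < I'' \<phi>" for \<phi>
  proof -
    show "?std \<phi> \<in> B0 S \<Sigma>"
      unfolding standardize_def using affine_transform_in_B0[OF alg that(1)] .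
    show "I' (?std \<phi>) = 0" "I'' (?std \<phi>) = 1"
      "I (?std \<phi>) = (I \<phi> - I' \<phi>) / (I'' \<phi> - I' \<phi>)"
      using constant_linear_standardize[OF alg cl' that(1), of I' I'']
        constant_linear_standardize[OF alg cl'' that(1), of I' I'']
        constant_linear_standardize[OF alg cl that(1), of I' I''] that(2) by simp_all
  qed
  have degenerate: "I \<phi> = I' \<phi> + \<beta> * (I'' \<phi> - I' \<phi>)"
    if "\<phi> \<in> B0 S \<Sigma>" "\<not> I' \<phi> < I'' \<phi>" for \<phi> \<beta>
    using that dominated weak_pareto_between[of \<phi>] by force
  show ?thesis
  proof (cases "\<exists>\<phi>\<^sub>0\<in>B0 S \<Sigma>. I' \<phi>\<^sub>0 < I'' \<phi>\<^sub>0")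
    case True
    then obtain \<phi>\<^sub>0 where \<phi>\<^sub>0: "\<phi>\<^sub>0 \<in> B0 S \<Sigma>" "I' \<phi>\<^sub>0 < I'' \<phi>\<^sub>0" by blast
    have "I (?std \<phi>\<^sub>0) \<in> {0..1}"
      using weak_pareto_between[of "?std \<phi>\<^sub>0"] std[OF \<phi>\<^sub>0] by simp
    moreover have "I \<phi> = I' \<phi> + I (?std \<phi>\<^sub>0) * (I'' \<phi> - I' \<phi>)" if "\<phi> \<in> B0 S \<Sigma>" for \<phi>
    proof (cases "I' \<phi> < I'' \<phi>")
      case True
      then have "(I \<phi> - I' \<phi>) / (I'' \<phi> - I' \<phi>) = I (?std \<phi>\<^sub>0)"
        using weak_pareto_determined[of "?std \<phi>" "?std \<phi>\<^sub>0"] std[OF \<phi>\<^sub>0]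
          std[OF \<open>\<phi> \<in> B0 S \<Sigma>\<close>] by simp
      with True show ?thesis
        by (simp add: field_simps)
    qed (use degenerate that in blast)
    ultimately show ?thesis
      using that by blast
  next
    case False
    then show ?thesis
      using degenerate[of _ 0] by (intro that[of 0]) auto
  qed
qed

end

theorem lemma7:
  fixes S :: "'a set" and \<Sigma> :: "'a set set"
    and I I' I'' :: "('a \<Rightarrow> real) \<Rightarrow> real"
  assumes "algebra S \<Sigma>"
    and "monotonic S \<Sigma> I" "constant_linear S \<Sigma> I"
    and "monotonic S \<Sigma> I'" "constant_linear S \<Sigma> I'"
    and "monotonic S \<Sigma> I''" "constant_linear S \<Sigma> I''"
    and "\<forall>\<phi>\<in>B0 S \<Sigma>. I' \<phi> \<le> I'' \<phi>"
  shows "(\<forall>\<phi>\<in>B0 S \<Sigma>. \<forall>\<psi>\<in>B0 S \<Sigma>.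
            I' \<phi> > I' \<psi> \<and> I'' \<phi> > I'' \<psi> \<longrightarrow> I \<phi> > I \<psi>)
         \<longleftrightarrow> (\<exists>\<alpha>\<in>{0..1}. \<forall>\<phi>\<in>B0 S \<Sigma>. I \<phi> = \<alpha> * I' \<phi> + (1 - \<alpha>) * I'' \<phi>)"
  (is "?pareto \<longleftrightarrow> ?mixture")
proof
  assume ?pareto
  then obtain \<beta> where "\<beta> \<in> {0..1}" "\<forall>\<phi>\<in>B0 S \<Sigma>. I \<phi> = I' \<phi> + \<beta> * (I'' \<phi> - I' \<phi>)"
    using weak_pareto_imp_interpolation[OF assms(1,3,5,7) _ assms(8)]
    unfolding weak_pareto_def by blast
  then have "1 - \<beta> \<in> {0..1}" "\<forall>\<phi>\<in>B0 S \<Sigma>. I \<phi> = (1 - \<beta>) * I' \<phi> + (1 - (1 - \<beta>)) * I'' \<phi>"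
    by (auto simp: algebra_simps)
  then show ?mixture ..
next
  assume ?mixture
  then show ?pareto
    using mixture_imp_weak_pareto unfolding weak_pareto_def by blast
qed

end
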